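(* Let $v(x,y)=[[x,[x,y]],[y,[x,y]]]\in F_2$, where $[a,b]=aba^{-1}b^{-1}$. Then the word map $v:\mathrm{SL}(2,\mathbb{C})^2\to \mathrm{SL}(2,\mathbb{C})$ is surjective, and consequently the induced word map on $\mathrm{PSL}(2,\mathbb{C})$ is surjective. *)

theory Defs
  imports "HOL-Analysis.Analysis"
begin

definition SL2 :: "(complex^2^2) set" where
  "SL2 = {A. det A = 1}"

text \<open>Group commutator [a,b] = a b a^-1 b^-1 (matrix_inv is the true inverse on SL2).\<close>
definition comm :: "complex^2^2 \<Rightarrow> complex^2^2 \<Rightarrow> complex^2^2" where
  "comm a b = a ** b ** matrix_inv a ** matrix_inv b"

definition vword :: "complex^2^2 \<Rightarrow> complex^2^2 \<Rightarrow> complex^2^2" where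
  "vword x y = comm (comm x (comm x y)) (comm y (comm x y))"

text \<open>PSL(2,C) = SL(2,C)/{\<plusminus>I}: classes of A and B agree iff A = B or A = -B.\<close>
definition psl_eq :: "complex^2^2 \<Rightarrow> complex^2^2 \<Rightarrow> bool" where
  "psl_eq A B \<longleftrightarrow> A = B \<or> A = - B"

end

theory Submission
  imports Defs "HOL-Computational_Algebra.Fundamental_Theorem_Algebra"
begin

text \<open>The word map is equivariant under simultaneous conjugation, and two non-scalar elements
  of SL(2,C) with the same trace are conjugate in SL(2,C), since both are conjugate to the
  companion matrix of their characteristic polynomial. So it suffices to find, for every trace
  t, a non-scalar value of v with trace t, and to hit the two scalars I and -I directly.
  For x = [[1,s],[0,1]] and y = [[0,-1],[1,0]] one computes
  tr v(x,y) = 2 - 4 (s^5 + 2 s^3)^2, which takes every value t by the fundamental theorem of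
  algebra; a value of trace different from 2 and -2 cannot be scalar. The traces 2 and -2 and
  the element -I are obtained from explicit witnesses.\<close>

definition mat2 :: "'a \<Rightarrow> 'a \<Rightarrow> 'a \<Rightarrow> 'a \<Rightarrow> 'a^2^2" where
  "mat2 a b c d = (\<chi> i j. if i = 1 then (if j = 1 then a else b) else (if j = 1 then c else d))"

lemma mat2_nth [simp]:
  "mat2 a b c d $ 1 $ 1 = a" "mat2 a b c d $ 1 $ 2 = b"
  "mat2 a b c d $ 2 $ 1 = c" "mat2 a b c d $ 2 $ 2 = d"
  by (simp_all add: mat2_def)

lemma mat2_eta: "A = mat2 (A$1$1) (A$1$2) (A$2$1) (A$2$2)"
  by (simp add: mat2_def vec_eq_iff forall_2)

lemma mat2_cases: obtains a b c d where "A = mat2 a b c d"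
  using mat2_eta by blast

lemma mat2_eq_iff:
  "mat2 a b c d = mat2 a' b' c' d' \<longleftrightarrow> a = a' \<and> b = b' \<and> c = c' \<and> d = d'"
  by (metis mat2_nth)

lemma mat_eq_mat2: "mat x = mat2 x 0 0 x"
  by (simp add: mat2_def mat_def vec_eq_iff forall_2)

lemma uminus_mat2: "- mat2 a b c d = mat2 (- a) (- b) (- c) (- d)"
  by (simp add: mat2_def vec_eq_iff forall_2)

lemma mat2_mult:
  fixes a :: "'a::semiring_1"
  shows "mat2 a b c d ** mat2 e f g h = mat2 (a*e + b*g) (a*f + b*h) (c*e + d*g) (c*f + d*h)"
  by (simp add: mat2_def vec_eq_iff forall_2 matrix_matrix_mult_def sum_2)

lemma det_mat2: "det (mat2 a b c d) = a*d - b*c"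
  by (simp add: det_2)

lemma trace_mat2: "trace (mat2 a b c d) = a + d"
  by (simp add: trace_def sum_2)

definition adj2 :: "'a::comm_ring_1^2^2 \<Rightarrow> 'a^2^2" where
  "adj2 A = mat2 (A$2$2) (- A$1$2) (- A$2$1) (A$1$1)"

lemma adj2_mat2: "adj2 (mat2 a b c d) = mat2 d (- b) (- c) a"
  by (simp add: adj2_def)

lemma mult_adj2_right: "A ** adj2 A = mat (det A)"
  by (cases A rule: mat2_cases) (simp add: adj2_mat2 mat2_mult det_mat2 mat_eq_mat2 mat2_eq_iff)

lemma mult_adj2_left: "adj2 A ** A = mat (det A)"
  by (cases A rule: mat2_cases)
    (simp add: adj2_mat2 mat2_mult det_mat2 mat_eq_mat2 mat2_eq_iff algebra_simps)

lemma det_adj2: "det (adj2 A) = det A"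
  by (cases A rule: mat2_cases) (simp add: adj2_mat2 det_mat2 algebra_simps)

lemma adj2_mult: "adj2 (A ** B) = adj2 B ** adj2 A"
  by (cases A rule: mat2_cases, cases B rule: mat2_cases)
    (simp add: mat2_mult adj2_mat2 mat2_eq_iff algebra_simps)

lemma adj2_adj2: "adj2 (adj2 A) = A"
  by (cases A rule: mat2_cases) (simp add: adj2_mat2)

lemma matrix_inv_eqI:
  fixes A :: "'a::semiring_1^'n^'n"
  assumes "A ** B = mat 1" "B ** A = mat 1"
  shows "matrix_inv A = B"
proof -
  have inv: "A ** matrix_inv A = mat 1 \<and> matrix_inv A ** A = mat 1"
    unfolding matrix_inv_def by (rule someI[of _ B]) (simp add: assms)
  have "matrix_inv A = (B ** A) ** matrix_inv A" using assms(2) by simp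
  also have "\<dots> = B" using inv by (simp flip: matrix_mul_assoc)
  finally show ?thesis .
qed

lemma matrix_inv_eq_adj2: "det A = 1 \<Longrightarrow> matrix_inv A = adj2 A"
  by (rule matrix_inv_eqI) (simp_all add: mult_adj2_left mult_adj2_right)

section \<open>The word map and conjugation\<close>

lemma comm_eq_adj2:
  "det A = 1 \<Longrightarrow> det B = 1 \<Longrightarrow> comm A B = A ** B ** adj2 A ** adj2 B"
  by (simp add: comm_def matrix_inv_eq_adj2)

lemma det_comm: "det A = 1 \<Longrightarrow> det B = 1 \<Longrightarrow> det (comm A B) = 1"
  by (simp add: comm_eq_adj2 det_mul det_adj2)

lemma det_vword: "det x = 1 \<Longrightarrow> det y = 1 \<Longrightarrow> det (vword x y) = 1"
  by (simp add: vword_def det_comm)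

lemma comm_mat2:
  "a*d - b*c = 1 \<Longrightarrow> e*h - f*g = 1 \<Longrightarrow> comm (mat2 a b c d) (mat2 e f g h)
     = mat2 a b c d ** mat2 e f g h ** mat2 d (- b) (- c) a ** mat2 h (- f) (- g) e"
  by (simp add: comm_eq_adj2 det_mat2 adj2_mat2)

definition conjugate :: "'a::comm_ring_1^2^2 \<Rightarrow> 'a^2^2 \<Rightarrow> 'a^2^2" where
  "conjugate R A = R ** A ** adj2 R"

lemma conjugate_mult: "det R = 1 \<Longrightarrow> conjugate R (A ** B) = conjugate R A ** conjugate R B"
  by (simp add: conjugate_def matrix_mul_assoc)
    (simp flip: matrix_mul_assoc add: mult_adj2_left)

lemma adj2_conjugate: "adj2 (conjugate R A) = conjugate R (adj2 A)"
  by (simp add: conjugate_def adj2_mult adj2_adj2 matrix_mul_assoc)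

lemma det_conjugate: "det R = 1 \<Longrightarrow> det (conjugate R A) = det A"
  by (simp add: conjugate_def det_mul det_adj2)

lemma comm_conjugate:
  "det R = 1 \<Longrightarrow> det A = 1 \<Longrightarrow> det B = 1 \<Longrightarrow>
    comm (conjugate R A) (conjugate R B) = conjugate R (comm A B)"
  by (simp add: comm_eq_adj2 det_conjugate conjugate_mult adj2_conjugate)

lemma vword_conjugate:
  "det R = 1 \<Longrightarrow> det x = 1 \<Longrightarrow> det y = 1 \<Longrightarrow>
    vword (conjugate R x) (conjugate R y) = conjugate R (vword x y)"
  by (simp add: vword_def comm_conjugate det_comm)

section \<open>Conjugacy classes of SL(2,C)\<close>

definition companion :: "complex \<Rightarrow> complex^2^2" where
  "companion t = mat2 0 (-1) 1 t"

lemma det_companion: "det (companion t) = 1"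
  by (simp add: companion_def det_mat2)

lemma similar_by_det_one:
  fixes A B P :: "complex^2^2"
  assumes "A ** P = P ** B" "det P \<noteq> 0"
  shows "\<exists>Q. det Q = 1 \<and> A ** Q = Q ** B"
proof -
  define r where "r = csqrt (det P)"
  have r: "r * r = det P" "r \<noteq> 0"
    using assms(2) by (simp_all add: r_def flip: power2_eq_square)
  define Q where "Q = P ** mat (1 / r)"
  have "B ** mat (1 / r) = mat (1 / r) ** B"
    by (cases B rule: mat2_cases) (simp add: mat_eq_mat2 mat2_mult mult.commute)
  then have "A ** Q = Q ** B"
    by (simp add: Q_def matrix_mul_assoc assms(1)) (simp flip: matrix_mul_assoc)
  moreover have "det Q = 1"
    using r assms(2) by (simp add: Q_def det_mul mat_eq_mat2 det_mat2 field_simps)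
  ultimately show ?thesis by blast
qed

text \<open>The columns of the conjugating matrix are a cyclic vector and its image under A.\<close>

lemma similar_companion:
  fixes A :: "complex^2^2"
  assumes "det A = 1" "\<forall>x. A \<noteq> mat x"
  shows "\<exists>P. det P = 1 \<and> A ** P = P ** companion (trace A)"
proof -
  obtain a b c d where A: "A = mat2 a b c d" by (rule mat2_cases)
  have det: "a*d - b*c = 1" using assms(1) by (simp add: A det_mat2)
  have nonscalar: "b \<noteq> 0 \<or> c \<noteq> 0 \<or> a \<noteq> d"
    using assms(2) by (auto simp: A mat_eq_mat2 mat2_eq_iff)
  have "\<exists>P. det P \<noteq> 0 \<and> A ** P = P ** companion (a + d)"
  proof -
    consider "c \<noteq> 0" | "c = 0" "b \<noteq> 0" | "c = 0" "b = 0" "a \<noteq> d"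
      using nonscalar by blast
    then show ?thesis
    proof cases
      case 1
      have "A ** mat2 1 a 0 c = mat2 1 a 0 c ** companion (a + d)"
        unfolding A companion_def mat2_mult mat2_eq_iff using det by algebra
      then show ?thesis using 1 by (intro exI[of _ "mat2 1 a 0 c"]) (simp add: det_mat2)
    next
      case 2
      have "A ** mat2 0 b 1 d = mat2 0 b 1 d ** companion (a + d)"
        unfolding A companion_def mat2_mult mat2_eq_iff using det 2 by algebra
      then show ?thesis using 2 by (intro exI[of _ "mat2 0 b 1 d"]) (simp add: det_mat2)
    next
      case 3
      have "A ** mat2 1 a 1 d = mat2 1 a 1 d ** companion (a + d)"
        unfolding A companion_def mat2_mult mat2_eq_iff using det 3 by algebra
      then show ?thesis using 3 by (intro exI[of _ "mat2 1 a 1 d"]) (simp add: det_mat2)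
    qed
  qed
  then show ?thesis
    using similar_by_det_one by (auto simp: A trace_mat2)
qed

lemma conjugate_if_same_trace:
  fixes g V :: "complex^2^2"
  assumes "det g = 1" "\<forall>x. g \<noteq> mat x"
    and "det V = 1" "\<forall>x. V \<noteq> mat x" "trace V = trace g"
  shows "\<exists>R. det R = 1 \<and> conjugate R V = g"
proof -
  obtain P where P: "det P = 1" "g ** P = P ** companion (trace g)"
    using similar_companion assms(1,2) by blast
  obtain Q where Q: "det Q = 1" "V ** Q = Q ** companion (trace g)"
    using similar_companion assms(3,4,5) by metis
  have "conjugate (P ** adj2 Q) V = P ** (adj2 Q ** (V ** Q)) ** adj2 P"
    by (simp add: conjugate_def adj2_mult adj2_adj2 matrix_mul_assoc)
  also have "\<dots> = (g ** P) ** adj2 P"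
    using Q P(2) by (simp add: matrix_mul_assoc mult_adj2_left)
  also have "\<dots> = g"
    using P(1) by (simp flip: matrix_mul_assoc add: mult_adj2_right)
  finally show ?thesis
    using P(1) Q(1) by (intro exI[of _ "P ** adj2 Q"]) (simp add: det_mul det_adj2)
qed

lemma scalar_det_one: "det (mat x :: complex^2^2) = 1 \<Longrightarrow> x = 1 \<or> x = -1"
  using square_eq_1_iff[of x] by (simp add: mat_eq_mat2 det_mat2 power2_eq_square)

lemma not_scalar_if_trace:
  fixes A :: "complex^2^2"
  assumes "det A = 1" "trace A \<noteq> 2" "trace A \<noteq> -2"
  shows "\<forall>x. A \<noteq> mat x"
proof (intro allI notI)
  fix x assume A: "A = mat x"
  then have "x = 1 \<or> x = -1" using assms(1) scalar_det_one by blast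
  then show False using assms(2,3) by (auto simp: A mat_eq_mat2 trace_mat2)
qed

section \<open>Values of the word v\<close>

lemma vword_mat_1: "vword (mat 1) (mat 1) = mat (1::complex)"
  by (simp add: vword_def comm_def matrix_inv_eq_adj2 mat_eq_mat2 adj2_mat2 det_mat2 mat2_mult)

lemma vword_eq_neg_1: "vword (mat2 (-1) (-1) 1 0) (mat2 (1+\<i>) 1 (-\<i>) (-\<i>)) = - mat 1"
proof -
  have i: "\<i> * \<i> = -1" by simp
  have c: "comm (mat2 (-1) (-1) 1 0) (mat2 (1+\<i>) 1 (-\<i>) (-\<i>)) = mat2 (-\<i>) 0 (-1+\<i>) \<i>"
    by (subst comm_mat2, simp, use i in algebra) (simp add: mat2_mult mat2_eq_iff, use i in algebra)
  have u: "comm (mat2 (-1) (-1) 1 0) (mat2 (-\<i>) 0 (-1+\<i>) \<i>) = mat2 1 (1-\<i>) (-1-\<i>) (-1)"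
    by (subst comm_mat2, simp, use i in algebra) (simp add: mat2_mult mat2_eq_iff, use i in algebra)
  have w: "comm (mat2 (1+\<i>) 1 (-\<i>) (-\<i>)) (mat2 (-\<i>) 0 (-1+\<i>) \<i>)
      = mat2 \<i> (1+\<i>) 0 (-\<i>)"
    by (subst comm_mat2, use i in algebra, use i in algebra)
      (simp add: mat2_mult mat2_eq_iff, use i in algebra)
  have v: "comm (mat2 1 (1-\<i>) (-1-\<i>) (-1)) (mat2 \<i> (1+\<i>) 0 (-\<i>)) = mat2 (-1) 0 0 (-1)"
    by (subst comm_mat2, use i in algebra, use i in algebra)
      (simp add: mat2_mult mat2_eq_iff, use i in algebra)
  show ?thesis unfolding vword_def c u w v by (simp add: mat_eq_mat2 uminus_mat2)
qed

lemma vword_trace_neg_2: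
  "vword (mat2 (-2) (-1) 1 0) (mat2 (-1) (-1) 1 0) = mat2 (-7) (-6) 6 (5::complex)"
proof -
  have c: "comm (mat2 (-2) (-1) 1 0) (mat2 (-1) (-1) 1 0) = mat2 3 1 (-1) (0::complex)"
    by (subst comm_mat2, simp, simp) (simp add: mat2_mult mat2_eq_iff)
  have u: "comm (mat2 (-2) (-1) 1 0) (mat2 3 1 (-1) 0) = mat2 (-1) (-5) 1 (4::complex)"
    by (subst comm_mat2, simp, simp) (simp add: mat2_mult mat2_eq_iff)
  have w: "comm (mat2 (-1) (-1) 1 0) (mat2 3 1 (-1) 0) = mat2 (-1) (-4) 2 (7::complex)"
    by (subst comm_mat2, simp, simp) (simp add: mat2_mult mat2_eq_iff)
  have v: "comm (mat2 (-1) (-5) 1 4) (mat2 (-1) (-4) 2 7) = mat2 (-7) (-6) 6 (5::complex)"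
    by (subst comm_mat2, simp, simp) (simp add: mat2_mult mat2_eq_iff)
  show ?thesis unfolding vword_def c u w v ..
qed

lemma vword_unipotent_companion_0:
  "vword (mat2 1 s 0 1) (companion 0) =
    mat2 (1 - 12 * s^6 - 14 * s^8 - 4 * s^10) (- 4 * s^3 - 6 * s^5 - 10 * s^7 - 4 * s^9)
      (4 * s^3 - 2 * s^5 - 6 * s^7 - 2 * s^9) (1 - 4 * s^6 - 2 * s^8)"
proof -
  have c: "comm (mat2 1 s 0 1) (mat2 0 (-1) 1 0) = mat2 (1 + s^2) s s 1"
    by (subst comm_mat2, simp, simp) (simp add: mat2_mult mat2_eq_iff, algebra)
  have u: "comm (mat2 1 s 0 1) (mat2 (1 + s^2) s s 1)
      = mat2 (1 + s^2 + 2 * s^4) (- 3 * s^3 - 2 * s^5) (s^3) (1 - s^2 - s^4)"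
    by (subst comm_mat2, simp, algebra) (simp add: mat2_mult mat2_eq_iff, algebra)
  have w: "comm (mat2 0 (-1) 1 0) (mat2 (1 + s^2) s s 1)
      = mat2 (1 + s^2) (- 2 * s - s^3) (- 2 * s - s^3) (1 + 3 * s^2 + s^4)"
    by (subst comm_mat2, simp, algebra) (simp add: mat2_mult mat2_eq_iff, algebra)
  have v: "comm (mat2 (1 + s^2 + 2 * s^4) (- 3 * s^3 - 2 * s^5) (s^3) (1 - s^2 - s^4))
      (mat2 (1 + s^2) (- 2 * s - s^3) (- 2 * s - s^3) (1 + 3 * s^2 + s^4))
    = mat2 (1 - 12 * s^6 - 14 * s^8 - 4 * s^10) (- 4 * s^3 - 6 * s^5 - 10 * s^7 - 4 * s^9)
      (4 * s^3 - 2 * s^5 - 6 * s^7 - 2 * s^9) (1 - 4 * s^6 - 2 * s^8)"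
    by (subst comm_mat2, algebra, algebra) (simp add: mat2_mult mat2_eq_iff, algebra)
  show ?thesis unfolding vword_def companion_def c u w v ..
qed

lemma vword_unipotent_companion_neg_2:
  "vword (mat2 1 s 0 1) (companion (-2)) =
    mat2 (1 + 4 * s^4 - 6 * s^5 + 16 * s^6 - 40 * s^7 + 58 * s^8 - 46 * s^9 + 16 * s^10
          + 2 * s^11 - 8 * s^12 + 4 * s^13)
      (- 4 * s^3 - 2 * s^5 + 2 * s^6 + 6 * s^7 - 16 * s^8 + 12 * s^9 - 2 * s^10 + 4 * s^12)
      (- 4 * s^3 + 12 * s^4 - 10 * s^5 - 8 * s^6 + 26 * s^7 - 24 * s^8 + 10 * s^9
          - 4 * s^11 + 2 * s^12)
      (1 - 4 * s^4 + 6 * s^5 - 8 * s^7 + 6 * s^8 - 2 * s^9 + 2 * s^11)"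
proof -
  have c: "comm (mat2 1 s 0 1) (mat2 0 (-1) 1 (-2)) = mat2 (1 + s^2) s s 1"
    by (subst comm_mat2, simp, simp) (simp add: mat2_mult mat2_eq_iff, algebra)
  have u: "comm (mat2 1 s 0 1) (mat2 (1 + s^2) s s 1)
      = mat2 (1 + s^2 + 2 * s^4) (- 3 * s^3 - 2 * s^5) (s^3) (1 - s^2 - s^4)"
    by (subst comm_mat2, simp, algebra) (simp add: mat2_mult mat2_eq_iff, algebra)
  have w: "comm (mat2 0 (-1) 1 (-2)) (mat2 (1 + s^2) s s 1)
      = mat2 (1 + 2 * s + s^2) (- 2 * s - 2 * s^2 - s^3) (2 * s - s^3) (1 - 2 * s - s^2 + s^4)"
    by (subst comm_mat2, simp, algebra) (simp add: mat2_mult mat2_eq_iff, algebra)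
  have v: "comm (mat2 (1 + s^2 + 2 * s^4) (- 3 * s^3 - 2 * s^5) (s^3) (1 - s^2 - s^4))
      (mat2 (1 + 2 * s + s^2) (- 2 * s - 2 * s^2 - s^3) (2 * s - s^3) (1 - 2 * s - s^2 + s^4))
    = mat2 (1 + 4 * s^4 - 6 * s^5 + 16 * s^6 - 40 * s^7 + 58 * s^8 - 46 * s^9 + 16 * s^10
          + 2 * s^11 - 8 * s^12 + 4 * s^13)
      (- 4 * s^3 - 2 * s^5 + 2 * s^6 + 6 * s^7 - 16 * s^8 + 12 * s^9 - 2 * s^10 + 4 * s^12)
      (- 4 * s^3 + 12 * s^4 - 10 * s^5 - 8 * s^6 + 26 * s^7 - 24 * s^8 + 10 * s^9
          - 4 * s^11 + 2 * s^12)
      (1 - 4 * s^4 + 6 * s^5 - 8 * s^7 + 6 * s^8 - 2 * s^9 + 2 * s^11)"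
    by (subst comm_mat2, algebra, algebra) (simp add: mat2_mult mat2_eq_iff, algebra)
  show ?thesis unfolding vword_def companion_def c u w v ..
qed

lemma vword_realizes_trace_generic:
  assumes "t \<noteq> 2" "t \<noteq> -2"
  shows "\<exists>x y. det x = 1 \<and> det y = 1 \<and> (\<forall>c. vword x y \<noteq> mat c)
    \<and> trace (vword x y) = t"
proof -
  define w where "w = csqrt ((2 - t) / 4)"
  have w: "4 * w^2 = 2 - t" by (simp add: w_def)
  have "\<exists>s. poly [:-w, 0, 0, 2, 0, 1:] s = 0"
    by (rule fundamental_theorem_of_algebra_alt) simp
  then obtain s where s: "s^5 + 2 * s^3 = w"
    by (auto simp: eval_nat_numeral algebra_simps)
  then have "trace (vword (mat2 1 s 0 1) (companion 0)) = 2 - 4 * w^2"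
    unfolding vword_unipotent_companion_0 trace_mat2 by (simp flip: s) algebra
  then have "trace (vword (mat2 1 s 0 1) (companion 0)) = t" using w by simp
  moreover have "det (vword (mat2 1 s 0 1) (companion 0)) = 1"
    by (simp add: det_vword det_mat2 det_companion)
  ultimately show ?thesis
    using assms not_scalar_if_trace
    by (intro exI[of _ "mat2 1 s 0 1"] exI[of _ "companion 0"]) (simp add: det_mat2 det_companion)
qed

lemma vword_realizes_trace_2:
  "\<exists>x y. det x = 1 \<and> det y = 1 \<and> (\<forall>c. vword x y \<noteq> mat c)
    \<and> trace (vword x y) = 2"
proof -
  define h :: "complex \<Rightarrow> complex" where "h s = s^5 + 4 * s^2 - 4 * s + 4" for s
  have "\<exists>s. poly [:4, -4, 4, 0, 0, 1:] s = (0::complex)"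
    by (rule fundamental_theorem_of_algebra_alt) simp
  then obtain s where h: "h s = 0"
    by (auto simp: h_def eval_nat_numeral algebra_simps)
  let ?V = "vword (mat2 1 s 0 1) (companion (-2))"
  have "trace ?V = 2 + 4 * s^6 * (1 - s)^2 * h s"
    unfolding vword_unipotent_companion_neg_2 trace_mat2 h_def
    by (simp add: algebra_simps power_numeral_reduce)
  then have "trace ?V = 2" using h by simp
  moreover have "?V $ 1 $ 2 \<noteq> 0"
  proof
    text \<open>A polynomial combination of h and the (1,2)-entry is the constant 2000,
      so they have no common root.\<close>
    have "(500 + 500 * s - 402 * s^3 - 392 * s^4 - 8 * s^5 + 358 * s^6 + 296 * s^7 + 458 * s^8
          - 126 * s^9 - 572 * s^10 - 212 * s^11) * h s
        + (98 + 10 * s + 58 * s^2 + 143 * s^3 + 53 * s^4) * ?V $ 1 $ 2 = 2000"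
      unfolding vword_unipotent_companion_neg_2 h_def mat2_nth
      by (simp add: algebra_simps power_numeral_reduce)
    moreover assume "?V $ 1 $ 2 = 0"
    ultimately show False using h by simp
  qed
  then have "\<forall>c. ?V \<noteq> mat c" by (auto simp: mat_def)
  ultimately show ?thesis
    by (intro exI[of _ "mat2 1 s 0 1"] exI[of _ "companion (-2)"]) (simp add: det_mat2 det_companion)
qed

lemma vword_realizes_trace:
  "\<exists>x y. det x = 1 \<and> det y = 1 \<and> (\<forall>c. vword x y \<noteq> mat c)
    \<and> trace (vword x y) = t"
proof -
  consider "t = 2" | "t = -2" | "t \<noteq> 2" "t \<noteq> -2" by blast
  then show ?thesis
  proof cases
    case 2
    have "\<forall>c. vword (mat2 (-2) (-1) 1 0) (mat2 (-1) (-1) 1 0) \<noteq> mat c"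
      by (simp add: vword_trace_neg_2 mat_eq_mat2 mat2_eq_iff)
    then show ?thesis
      using 2 by (intro exI[of _ "mat2 (-2) (-1) 1 0"] exI[of _ "mat2 (-1) (-1) 1 0"])
        (simp add: vword_trace_neg_2 trace_mat2 det_mat2)
  qed (use vword_realizes_trace_2 vword_realizes_trace_generic in auto)
qed

lemma vword_surjective_SL2: "g \<in> SL2 \<Longrightarrow> \<exists>x\<in>SL2. \<exists>y\<in>SL2. vword x y = g"
proof -
  assume "g \<in> SL2"
  then have g: "det g = 1" by (simp add: SL2_def)
  show ?thesis
  proof (cases "\<forall>c. g \<noteq> mat c")
    case True
    obtain x y where xy: "det x = 1" "det y = 1" "\<forall>c. vword x y \<noteq> mat c"
        "trace (vword x y) = trace g"
      using vword_realizes_trace by blast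
    then obtain R where R: "det R = 1" "conjugate R (vword x y) = g"
      using conjugate_if_same_trace[OF g True det_vword] by blast
    have "vword (conjugate R x) (conjugate R y) = g"
      using xy R by (simp add: vword_conjugate)
    moreover have "conjugate R x \<in> SL2" "conjugate R y \<in> SL2"
      using xy R(1) by (simp_all add: SL2_def det_conjugate)
    ultimately show ?thesis by blast
  next
    case False
    then obtain c where c: "g = mat c" by blast
    then have "c = 1 \<or> c = -1" using g scalar_det_one by blast
    then show ?thesis
    proof
      assume "c = 1"
      then show ?thesis
        using c vword_mat_1 by (intro bexI[of _ "mat 1"]) (simp_all add: SL2_def)
    next
      assume "c = -1"
      then have "g = - mat 1" by (simp add: c mat_eq_mat2 uminus_mat2)
      moreover have "mat2 (-1) (-1) 1 0 \<in> SL2" "mat2 (1+\<i>) 1 (-\<i>) (-\<i>) \<in> SL2"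
        by (simp_all add: SL2_def det_mat2 ring_distribs)
      ultimately show ?thesis using vword_eq_neg_1 by blast
    qed
  qed
qed

theorem theorem9p1:
  shows "(\<forall>g\<in>SL2. \<exists>x\<in>SL2. \<exists>y\<in>SL2. vword x y = g)
       \<and> (\<forall>g\<in>SL2. \<exists>x\<in>SL2. \<exists>y\<in>SL2. psl_eq (vword x y) g)"
  using vword_surjective_SL2 unfolding psl_eq_def by blast

end
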